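(* If $G=\prod_{i=1}^tK[a_i,b_i]$ with $2\le b_1\le\cdots\le b_t$, then $$\mathrm{IR}(G)\le\frac1{b_1}\prod_{i=1}^ta_ib_i+\frac2{b_t}\prod_{i=1}^tb_i.$$
   Context: $K[a,b]$ is the balanced complete $b$-partite graph with $b$ parts of size $a$ (vertices adjacent iff in different parts); $\prod$ denotes the direct product of graphs ($(g_1,h_1)\sim(g_2,h_2)$ iff $g_1\sim g_2$ and $h_1\sim h_2$). A set $S$ is irredundant if every $v\in S$ has a private neighbor, i.e. a vertex in $N[v]\setminus N[S\setminus\{v\}]$ (closed neighborhoods). $\mathrm{IR}(G)$ is the maximum size of an irredundant set. *)

theory Defs
  imports Complex_Main "HOL-Library.FuncSet"
begin

text \<open>A graph is given by a vertex set V and a symmetric adjacency relation E.\<close>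

definition cnbhd :: "'v set \<Rightarrow> ('v \<Rightarrow> 'v \<Rightarrow> bool) \<Rightarrow> 'v \<Rightarrow> 'v set" where
  "cnbhd V E v = {u \<in> V. u = v \<or> E v u}"

definition cnbhd_set :: "'v set \<Rightarrow> ('v \<Rightarrow> 'v \<Rightarrow> bool) \<Rightarrow> 'v set \<Rightarrow> 'v set" where
  "cnbhd_set V E S = (\<Union>w\<in>S. cnbhd V E w)"

definition irredundant :: "'v set \<Rightarrow> ('v \<Rightarrow> 'v \<Rightarrow> bool) \<Rightarrow> 'v set \<Rightarrow> bool" where
  "irredundant V E S \<longleftrightarrow> S \<subseteq> V \<and>
     (\<forall>v\<in>S. \<exists>u. u \<in> cnbhd V E v - cnbhd_set V E (S - {v}))"

text \<open>Upper irredundance number (for finite graphs; Max over all irredundant sets).\<close>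
definition IR :: "'v set \<Rightarrow> ('v \<Rightarrow> 'v \<Rightarrow> bool) \<Rightarrow> nat" where
  "IR V E = Max (card ` {S. irredundant V E S})"

text \<open>Balanced complete b-partite graph K[a,b]: vertex (p,k) is the k-th vertex of part p.\<close>
definition K_verts :: "nat \<Rightarrow> nat \<Rightarrow> (nat \<times> nat) set" where
  "K_verts a b = {0..<b} \<times> {0..<a}"

definition K_adj :: "(nat \<times> nat) \<Rightarrow> (nat \<times> nat) \<Rightarrow> bool" where
  "K_adj x y \<longleftrightarrow> fst x \<noteq> fst y"

definition dprod_verts :: "nat \<Rightarrow> (nat \<Rightarrow> 'v set) \<Rightarrow> (nat \<Rightarrow> 'v) set" where
  "dprod_verts t V = PiE {..<t} V"

definition dprod_adj :: "nat \<Rightarrow> (nat \<Rightarrow> 'v \<Rightarrow> 'v \<Rightarrow> bool) \<Rightarrow> (nat \<Rightarrow> 'v) \<Rightarrow> (nat \<Rightarrow> 'v) \<Rightarrow> bool" where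
  "dprod_adj t E x y \<longleftrightarrow> (\<forall>i<t. E i (x i) (y i))"

end

theory Submission
  imports Defs
begin

(*
  Split a maximum irredundant set S into its isolated vertices S1 and the rest S2.
  S1 is independent. Subtracting, in every factor, the part index of the first factor (mod b_i)
  is injective on independent sets: two vertices with the same offsets either have the same
  part indices everywhere or, as b_1 <= b_i, different ones everywhere, i.e. they are adjacent.
  Hence |S1| <= |V| / b_1.
  Every vertex of S2 has a private neighbour u different from itself. If three vertices of S2
  had the same part indices in the first t - 1 factors, the two that are not adjacent to the
  private neighbour of the third must agree with it in the last factor; then they have the same
  neighbourhood, contradicting privacy. Hence |S2| <= 2 b_1 ... b_(t-1).
*)

definition independent_set :: "('v \<Rightarrow> 'v \<Rightarrow> bool) \<Rightarrow> 'v set \<Rightarrow> bool" where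
  "independent_set E S \<longleftrightarrow> (\<forall>x\<in>S. \<forall>y\<in>S. \<not> E x y)"

definition open_irredundant :: "'v set \<Rightarrow> ('v \<Rightarrow> 'v \<Rightarrow> bool) \<Rightarrow> 'v set \<Rightarrow> bool" where
  "open_irredundant V E S \<longleftrightarrow> S \<subseteq> V \<and> (\<forall>v\<in>S. \<exists>u\<in>V. E v u \<and> (\<forall>w\<in>S - {v}. \<not> E w u))"

lemma IR_attained:
  assumes "finite V"
  obtains S where "irredundant V E S" "card S = IR V E"
proof -
  have "{S. irredundant V E S} \<subseteq> Pow V"
    by (auto simp: irredundant_def)
  then have "finite {S. irredundant V E S}"
    using assms by (rule finite_subset[OF _ finite_Pow_iff[THEN iffD2]])
  moreover have "irredundant V E {}"
    by (simp add: irredundant_def)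
  ultimately have "IR V E \<in> card ` {S. irredundant V E S}"
    unfolding IR_def by (intro Max_in) auto
  then show thesis
    using that by auto
qed

lemma irredundant_private_neighbour:
  assumes "irredundant V E S" "v \<in> S"
  obtains u where "u \<in> V" "u = v \<or> E v u" "\<And>w. w \<in> S - {v} \<Longrightarrow> u \<noteq> w \<and> \<not> E w u"
proof -
  obtain u where "u \<in> cnbhd V E v" "u \<notin> cnbhd_set V E (S - {v})"
    using assms by (auto simp: irredundant_def)
  then show thesis
    using that by (auto simp: cnbhd_def cnbhd_set_def)
qed

lemma irredundant_non_isolated_open_irredundant:
  assumes "irredundant V E S" "symp E" "\<And>x. \<not> E x x"
  shows "open_irredundant V E {v \<in> S. \<exists>w\<in>S. E v w}"
  unfolding open_irredundant_def
proof (intro conjI ballI)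
  show "{v \<in> S. \<exists>w\<in>S. E v w} \<subseteq> V"
    using assms(1) by (auto simp: irredundant_def)
next
  fix v assume v: "v \<in> {v \<in> S. \<exists>w\<in>S. E v w}"
  then obtain w where w: "w \<in> S" "E w v"
    using assms(2) by (auto dest: sympD)
  obtain u where u: "u \<in> V" "u = v \<or> E v u" "\<And>w. w \<in> S - {v} \<Longrightarrow> u \<noteq> w \<and> \<not> E w u"
    using irredundant_private_neighbour[OF assms(1)] v by blast
  have "w \<noteq> v"
    using w(2) assms(3) by auto
  then have "u \<noteq> v"
    using u(3)[of w] w by auto
  then show "\<exists>u\<in>V. E v u \<and> (\<forall>w\<in>{v \<in> S. \<exists>w\<in>S. E v w} - {v}. \<not> E w u)"
    using u by auto
qed

lemma IR_le_independent_plus_open_irredundant: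
  assumes "finite V" "symp E" "\<And>x. \<not> E x x"
  obtains S\<^sub>1 S\<^sub>2 where "S\<^sub>1 \<subseteq> V" "independent_set E S\<^sub>1" "open_irredundant V E S\<^sub>2"
    "IR V E \<le> card S\<^sub>1 + card S\<^sub>2"
proof -
  obtain S where S: "irredundant V E S" "card S = IR V E"
    using IR_attained[OF assms(1)] by blast
  let ?S\<^sub>1 = "{v \<in> S. \<not> (\<exists>w\<in>S. E v w)}" and ?S\<^sub>2 = "{v \<in> S. \<exists>w\<in>S. E v w}"
  have "S = ?S\<^sub>1 \<union> ?S\<^sub>2"
    by blast
  then have "IR V E \<le> card ?S\<^sub>1 + card ?S\<^sub>2"
    using S(2) card_Un_le[of ?S\<^sub>1 ?S\<^sub>2] by simp
  moreover have "?S\<^sub>1 \<subseteq> V"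
    using S(1) by (auto simp: irredundant_def)
  moreover have "independent_set E ?S\<^sub>1"
    by (auto simp: independent_set_def)
  moreover have "open_irredundant V E ?S\<^sub>2"
    by (rule irredundant_non_isolated_open_irredundant[OF S(1) assms(2,3)])
  ultimately show thesis
    using that by blast
qed

lemma card_le_2_if_no_three_distinct:
  assumes "finite A"
    and "\<And>x y z. x \<in> A \<Longrightarrow> y \<in> A \<Longrightarrow> z \<in> A \<Longrightarrow> x = y \<or> x = z \<or> y = z"
  shows "card A \<le> 2"
proof (rule ccontr)
  assume "\<not> card A \<le> 2"
  then obtain B where "B \<subseteq> A" "card B = 3"
    using obtain_subset_with_card_n[of 3 A] by auto
  then obtain x y z where "x \<in> A" "y \<in> A" "z \<in> A" "x \<noteq> y" "x \<noteq> z" "y \<noteq> z"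
    by (auto simp: card_3_iff)
  then show False
    using assms(2) by blast
qed

lemma card_le_mult_card_image:
  assumes "finite S" "\<And>g. card {x \<in> S. f x = g} \<le> k"
  shows "card S \<le> k * card (f ` S)"
proof -
  have "card S = card (\<Union>g\<in>f ` S. {x \<in> S. f x = g})"
    by (rule arg_cong[where f = card]) auto
  also have "\<dots> = (\<Sum>g\<in>f ` S. card {x \<in> S. f x = g})"
    using assms(1) by (intro card_UN_disjoint) auto
  also have "\<dots> \<le> k * card (f ` S)"
    using sum_bounded_above[of "f ` S" "\<lambda>g. card {x \<in> S. f x = g}" k] assms(2)
    by (simp add: mult.commute)
  finally show ?thesis .
qed

lemma eq_if_diff_mod_eq:
  fixes p q m :: nat and r :: int
  assumes "p < m" "q < m" "(int p - r) mod int m = (int q - r) mod int m"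
  shows "p = q"
proof -
  have "(int p - r + r) mod int m = (int q - r + r) mod int m"
    using assms(3) by (rule mod_add_cong) simp
  then show ?thesis
    using assms(1,2) by simp
qed

lemma eq_if_mod_diff_eq:
  fixes p q m :: nat and r :: int
  assumes "p < m" "q < m" "(r - int p) mod int m = (r - int q) mod int m"
  shows "p = q"
proof -
  have "(r - (r - int p)) mod int m = (r - (r - int q)) mod int m"
    by (rule mod_diff_cong[OF refl assms(3)])
  then show ?thesis
    using assms(1,2) by simp
qed

lemma mem_dprod_K_verts:
  "x \<in> dprod_verts t (\<lambda>i. K_verts (a i) (b i))
     \<longleftrightarrow> x \<in> PiE {..<t} (\<lambda>i. {0..<b i} \<times> {0..<a i})"
  by (simp add: dprod_verts_def K_verts_def)

lemma dprod_K_adj_iff: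
  "dprod_adj t (\<lambda>i. K_adj) x y \<longleftrightarrow> (\<forall>i<t. fst (x i) \<noteq> fst (y i))"
  by (simp add: dprod_adj_def K_adj_def)

lemma symp_dprod_K_adj: "symp (dprod_adj t (\<lambda>i. K_adj))"
  by (auto simp: symp_def dprod_K_adj_iff)

lemma dprod_K_adj_irrefl: "0 < t \<Longrightarrow> \<not> dprod_adj t (\<lambda>i. K_adj) x x"
  by (auto simp: dprod_K_adj_iff intro: exI[of _ 0])

lemma finite_dprod_K_verts: "finite (dprod_verts t (\<lambda>i. K_verts (a i) (b i)))"
  by (simp add: dprod_verts_def K_verts_def finite_PiE)

lemma dprod_K_same_offsets_parts_eq_or_adj:
  assumes "x \<in> dprod_verts t (\<lambda>i. K_verts (a i) (b i))" "y \<in> dprod_verts t (\<lambda>i. K_verts (a i) (b i))"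
    and "0 < t" "\<And>i. i < t \<Longrightarrow> b 0 \<le> b i"
    and offsets: "\<And>i. i < t \<Longrightarrow>
      (int (fst (x i)) - int (fst (x 0))) mod int (b i) = (int (fst (y i)) - int (fst (y 0))) mod int (b i)"
  shows "(\<forall>i<t. fst (x i) = fst (y i)) \<or> dprod_adj t (\<lambda>i. K_adj) x y"
proof -
  have part_lt: "fst (x i) < b i" "fst (y i) < b i" if "i < t" for i
    using assms(1,2) that by (auto simp: mem_dprod_K_verts PiE_iff mem_Times_iff)
  show ?thesis
  proof (cases "fst (x 0) = fst (y 0)")
    case True
    then show ?thesis
      using eq_if_diff_mod_eq part_lt offsets by metis
  next
    case False
    have "fst (x i) \<noteq> fst (y i)" if "i < t" for i
    proof
      assume "fst (x i) = fst (y i)"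
      then have "(int (fst (x i)) - int (fst (x 0))) mod int (b i)
                 = (int (fst (x i)) - int (fst (y 0))) mod int (b i)"
        using offsets[OF that] by simp
      then show False
        using False eq_if_mod_diff_eq part_lt[OF \<open>0 < t\<close>] assms(4)[OF that]
        by (metis order_less_le_trans)
    qed
    then show ?thesis
      by (simp add: dprod_K_adj_iff)
  qed
qed

definition part_offsets :: "nat \<Rightarrow> (nat \<Rightarrow> nat) \<Rightarrow> (nat \<Rightarrow> nat \<times> nat) \<Rightarrow> nat \<Rightarrow> nat \<times> nat" where
  "part_offsets t b x =
     (\<lambda>i\<in>{..<t}. (nat ((int (fst (x i)) - int (fst (x 0))) mod int (b i)), snd (x i)))"

lemma part_offsets_eq_imp_eq_or_adj:
  assumes x: "x \<in> dprod_verts t (\<lambda>i. K_verts (a i) (b i))" and y: "y \<in> dprod_verts t (\<lambda>i. K_verts (a i) (b i))"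
    and "0 < t" "0 < b 0" "\<And>i. i < t \<Longrightarrow> b 0 \<le> b i"
    and "part_offsets t b x = part_offsets t b y"
  shows "x = y \<or> dprod_adj t (\<lambda>i. K_adj) x y"
proof -
  have offsets_snd: "(int (fst (x i)) - int (fst (x 0))) mod int (b i) = (int (fst (y i)) - int (fst (y 0))) mod int (b i)
      \<and> snd (x i) = snd (y i)" if "i < t" for i
  proof -
    have "0 < b i"
      using assms(4,5) that by (meson order_less_le_trans)
    moreover have "nat ((int (fst (x i)) - int (fst (x 0))) mod int (b i))
        = nat ((int (fst (y i)) - int (fst (y 0))) mod int (b i)) \<and> snd (x i) = snd (y i)"
      using fun_cong[OF assms(6), of i] that by (simp add: part_offsets_def)
    ultimately show ?thesis
      by (simp add: eq_nat_nat_iff)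
  qed
  have "(\<forall>i<t. fst (x i) = fst (y i)) \<or> dprod_adj t (\<lambda>i. K_adj) x y"
    using dprod_K_same_offsets_parts_eq_or_adj[OF x y assms(3,5)] offsets_snd by blast
  moreover have "x = y" if "\<forall>i<t. fst (x i) = fst (y i)"
  proof (rule PiE_ext)
    show "x \<in> PiE {..<t} (\<lambda>i. {0..<b i} \<times> {0..<a i})" "y \<in> PiE {..<t} (\<lambda>i. {0..<b i} \<times> {0..<a i})"
      using x y by (simp_all add: mem_dprod_K_verts)
    show "x i = y i" if "i \<in> {..<t}" for i
      using offsets_snd[of i] \<open>\<forall>i<t. fst (x i) = fst (y i)\<close> that by (simp add: prod_eq_iff)
  qed
  ultimately show ?thesis
    by blast
qed

lemma independent_set_dprod_K_card:
  assumes "0 < t" "0 < b 0" "\<And>i. i < t \<Longrightarrow> b 0 \<le> b i"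
    and "S \<subseteq> dprod_verts t (\<lambda>i. K_verts (a i) (b i))"
    and "independent_set (dprod_adj t (\<lambda>i. K_adj)) S"
  shows "card S * b 0 \<le> (\<Prod>i<t. a i * b i)"
proof -
  define W where "W = PiE {..<t} (\<lambda>i. (if i = 0 then {0} else {0..<b i}) \<times> {0..<a i})"
  have "part_offsets t b x \<in> W" if "x \<in> S" for x
    unfolding part_offsets_def W_def restrict_PiE_iff
  proof
    fix i assume "i \<in> {..<t}"
    then have "x i \<in> {0..<b i} \<times> {0..<a i}" "0 < b i"
      using assms(2-4) \<open>x \<in> S\<close> by (auto simp: mem_dprod_K_verts PiE_iff intro: order_less_le_trans)
    then show "(nat ((int (fst (x i)) - int (fst (x 0))) mod int (b i)), snd (x i))
               \<in> (if i = 0 then {0} else {0..<b i}) \<times> {0..<a i}"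
      by (auto simp: mem_Times_iff nat_less_iff)
  qed
  moreover have "inj_on (part_offsets t b) S"
  proof
    fix x y assume "x \<in> S" "y \<in> S" "part_offsets t b x = part_offsets t b y"
    moreover have "\<not> dprod_adj t (\<lambda>i. K_adj) x y"
      using assms(5) \<open>x \<in> S\<close> \<open>y \<in> S\<close> unfolding independent_set_def by blast
    ultimately show "x = y"
      using part_offsets_eq_imp_eq_or_adj[of x t a b y] assms(1-4) by blast
  qed
  ultimately have "card S \<le> card W"
    by (intro card_inj_on_le) (auto simp: W_def finite_PiE)
  moreover have "card W = a 0 * (\<Prod>i\<in>{..<t} - {0}. a i * b i)"
  proof -
    have "card W = card ({0::nat} \<times> {0..<a 0})
                   * (\<Prod>i\<in>{..<t} - {0}. card ((if i = 0 then {0} else {0..<b i}) \<times> {0..<a i}))"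
      unfolding W_def card_PiE[OF finite_lessThan] using assms(1) by (simp add: prod.remove)
    also have "\<dots> = a 0 * (\<Prod>i\<in>{..<t} - {0}. a i * b i)"
      by (intro arg_cong2[where f = "(*)"] prod.cong) (auto simp: card_cartesian_product)
    finally show ?thesis .
  qed
  moreover have "(\<Prod>i<t. a i * b i) = a 0 * b 0 * (\<Prod>i\<in>{..<t} - {0}. a i * b i)"
    using assms(1) by (simp add: prod.remove)
  ultimately show ?thesis
    by (simp add: mult.commute mult.left_commute)
qed

lemma open_irredundant_dprod_K_fibre:
  assumes "0 < t" "open_irredundant (dprod_verts t (\<lambda>i. K_verts (a i) (b i))) (dprod_adj t (\<lambda>i. K_adj)) S"
    and "x \<in> S" "y \<in> S" "z \<in> S"
    and "\<And>i. i < t - 1 \<Longrightarrow> fst (y i) = fst (x i)" "\<And>i. i < t - 1 \<Longrightarrow> fst (z i) = fst (x i)"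
  shows "x = y \<or> x = z \<or> y = z"
proof (rule ccontr)
  assume distinct: "\<not> (x = y \<or> x = z \<or> y = z)"
  have private_neighbour: "\<exists>u :: nat \<Rightarrow> nat \<times> nat. (\<forall>i<t. fst (v i) \<noteq> fst (u i)) \<and> (\<forall>w\<in>S - {v}. \<exists>i<t. fst (w i) = fst (u i))"
    if v: "v \<in> S" for v
  proof -
    obtain u where "dprod_adj t (\<lambda>i. K_adj) v u" "\<forall>w\<in>S - {v}. \<not> dprod_adj t (\<lambda>i. K_adj) w u"
      using assms(2) v unfolding open_irredundant_def by blast
    then have "(\<forall>i<t. fst (v i) \<noteq> fst (u i)) \<and> (\<forall>w\<in>S - {v}. \<exists>i<t. fst (w i) = fst (u i))"
      by (simp add: dprod_K_adj_iff)
    then show ?thesis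
      by (rule exI[where x = u])
  qed
  obtain u :: "nat \<Rightarrow> nat \<times> nat" where u: "\<forall>i<t. fst (x i) \<noteq> fst (u i)" "\<forall>w\<in>S - {x}. \<exists>i<t. fst (w i) = fst (u i)"
    using private_neighbour[OF assms(3)] by blast
  have last_part: "fst (w (t - 1)) = fst (u (t - 1))"
    if w: "w \<in> S - {x}" "\<And>i. i < t - 1 \<Longrightarrow> fst (w i) = fst (x i)" for w
  proof -
    obtain i where i: "i < t" "fst (w i) = fst (u i)"
      using u(2) w(1) by blast
    have "\<not> i < t - 1"
      using w(2)[of i] u(1) i by auto
    then have "i = t - 1"
      using i(1) by linarith
    then show ?thesis
      using i(2) by simp
  qed
  have "y \<in> S - {x}" "z \<in> S - {x}"
    using assms(4,5) distinct by auto
  then have last_eq: "fst (y (t - 1)) = fst (z (t - 1))"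
    using last_part[OF _ assms(6)] last_part[OF _ assms(7)] by simp
  have same_parts: "fst (y i) = fst (z i)" if "i < t" for i
  proof (cases "i < t - 1")
    case True
    then show ?thesis
      using assms(6,7) by simp
  next
    case False
    then have "i = t - 1"
      using that by linarith
    then show ?thesis
      using last_eq by simp
  qed
  obtain u' :: "nat \<Rightarrow> nat \<times> nat" where u': "\<forall>i<t. fst (y i) \<noteq> fst (u' i)" "\<forall>w\<in>S - {y}. \<exists>i<t. fst (w i) = fst (u' i)"
    using private_neighbour[OF assms(4)] by blast
  have "z \<in> S - {y}"
    using assms(5) distinct by auto
  then obtain i where "i < t" "fst (z i) = fst (u' i)"
    using u'(2) by blast
  then show False
    using u'(1) same_parts[of i] by auto
qed

lemma open_irredundant_dprod_K_card:
  assumes "0 < t" "open_irredundant (dprod_verts t (\<lambda>i. K_verts (a i) (b i))) (dprod_adj t (\<lambda>i. K_adj)) S"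
  shows "card S \<le> 2 * (\<Prod>i<t - 1. b i)"
proof -
  define G where "G x = (\<lambda>i\<in>{..<t - 1}. fst (x i))" for x :: "nat \<Rightarrow> nat \<times> nat"
  have S_sub: "S \<subseteq> dprod_verts t (\<lambda>i. K_verts (a i) (b i))"
    using assms(2) by (simp add: open_irredundant_def)
  then have "finite S"
    using finite_dprod_K_verts finite_subset by blast
  have same_parts: "fst (x i) = fst (y i)" if "G x = G y" "i < t - 1" for x y i
    using fun_cong[OF that(1), of i] that(2) by (simp add: G_def)
  have "card {x \<in> S. G x = g} \<le> 2" for g
  proof (rule card_le_2_if_no_three_distinct)
    show "finite {x \<in> S. G x = g}"
      using \<open>finite S\<close> by simp
  next
    fix x y z assume "x \<in> {x \<in> S. G x = g}" "y \<in> {x \<in> S. G x = g}" "z \<in> {x \<in> S. G x = g}"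
    then have "x \<in> S" "y \<in> S" "z \<in> S" "G y = G x" "G z = G x"
      by simp_all
    then show "x = y \<or> x = z \<or> y = z"
      by (intro open_irredundant_dprod_K_fibre[OF assms] same_parts)
  qed
  then have "card S \<le> 2 * card (G ` S)"
    using \<open>finite S\<close> by (rule card_le_mult_card_image[rotated])
  moreover have "G x \<in> PiE {..<t - 1} (\<lambda>i. {0..<b i})" if "x \<in> S" for x
    unfolding G_def restrict_PiE_iff
    using S_sub that by (auto simp: mem_dprod_K_verts PiE_iff mem_Times_iff)
  then have "G ` S \<subseteq> PiE {..<t - 1} (\<lambda>i. {0..<b i})"
    by blast
  then have "card (G ` S) \<le> card (PiE {..<t - 1} (\<lambda>i. {0..<b i}))"
    by (rule card_mono[OF finite_PiE[OF finite_lessThan], rotated]) simp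
  moreover have "card (PiE {..<t - 1} (\<lambda>i. {0..<b i})) = (\<Prod>i<t - 1. b i)"
    by (simp add: card_PiE)
  ultimately show ?thesis
    by linarith
qed

theorem theorem5p4:
  fixes t :: nat and a b :: "nat \<Rightarrow> nat"
  assumes "t \<ge> 1"
    and "2 \<le> b 0"
    and "\<And>i j. i \<le> j \<Longrightarrow> j < t \<Longrightarrow> b i \<le> b j"
  shows "real (IR (dprod_verts t (\<lambda>i. K_verts (a i) (b i))) (dprod_adj t (\<lambda>i. K_adj)))
         \<le> (\<Prod>i<t. real (a i * b i)) / real (b 0) + 2 * (\<Prod>i<t. real (b i)) / real (b (t - 1))"
proof -
  have t_pos: "0 < t"
    using assms(1) by simp
  have b_mono: "\<And>i. i < t \<Longrightarrow> b 0 \<le> b i"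
    using assms(3) by simp
  have b_pos: "0 < b 0" "0 < b (t - 1)"
    using assms(2) b_mono[of "t - 1"] t_pos by linarith+
  obtain S\<^sub>1 S\<^sub>2 where S\<^sub>1: "S\<^sub>1 \<subseteq> dprod_verts t (\<lambda>i. K_verts (a i) (b i))"
      "independent_set (dprod_adj t (\<lambda>i. K_adj)) S\<^sub>1"
    and S\<^sub>2: "open_irredundant (dprod_verts t (\<lambda>i. K_verts (a i) (b i))) (dprod_adj t (\<lambda>i. K_adj)) S\<^sub>2"
    and IR_le: "IR (dprod_verts t (\<lambda>i. K_verts (a i) (b i))) (dprod_adj t (\<lambda>i. K_adj)) \<le> card S\<^sub>1 + card S\<^sub>2"
    using IR_le_independent_plus_open_irredundant[OF finite_dprod_K_verts symp_dprod_K_adj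
        dprod_K_adj_irrefl[OF t_pos]] by blast
  have "card S\<^sub>1 * b 0 \<le> (\<Prod>i<t. a i * b i)"
    using independent_set_dprod_K_card[of t b S\<^sub>1 a] t_pos b_pos(1) b_mono S\<^sub>1 by blast
  then have card_S\<^sub>1: "real (card S\<^sub>1) \<le> (\<Prod>i<t. real (a i * b i)) / real (b 0)"
    using b_pos(1) by (simp add: pos_le_divide_eq flip: of_nat_prod of_nat_mult)
  have "card S\<^sub>2 * b (t - 1) \<le> 2 * (\<Prod>i<t - 1. b i) * b (t - 1)"
    by (rule mult_le_mono1[OF open_irredundant_dprod_K_card[OF t_pos S\<^sub>2]])
  also have "\<dots> = 2 * (\<Prod>i<t. b i)"
    using t_pos by (cases t) (simp_all add: prod.lessThan_Suc)
  finally have card_S\<^sub>2: "real (card S\<^sub>2) \<le> 2 * (\<Prod>i<t. real (b i)) / real (b (t - 1))"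
    using b_pos(2) by (simp add: pos_le_divide_eq flip: of_nat_prod of_nat_mult)
  show ?thesis
    using IR_le card_S\<^sub>1 card_S\<^sub>2 by linarith
qed

end
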